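(* Let $D\ge3$, $3\le k\le D$, and let $\mathbf a:\mathbb R^D\to\mathcal H$ define a CMF dictionary with kernel $\varphi(\|\cdot-\cdot\|_p^p)$, where $\varphi$ is moreover right-differentiable at $0$ (finite right derivative). Then there exists $x_0>0$ such that for every $\Delta>0$ with $\Delta^p<x_0$ and every points $\theta^\star_1,\dots,\theta^\star_k\in\mathbb R^D$ satisfying $\|\theta^\star_\ell-\theta^\star_{\ell'}\|_p^p=2\Delta^p$ for $\ell\ne\ell'$ and $\|\theta^\star_\ell\|_p^p=\Delta^p$ for all $\ell$, the vector $\mathbf y=\sum_{\ell=1}^k\mathbf a(\theta^\star_\ell)$ satisfies $|\langle\mathbf a(\mathbf 0),\mathbf y\rangle|>|\langle\mathbf a(\theta^\star_\ell),\mathbf y\rangle|$ for every $\ell$; hence OMP with input $\mathbf y$ selects a parameter not in $\{\theta^\star_\ell\}_{\ell=1}^k$ at the first iteration. In the special case $\varphi(t)=e^{-\lambda t}$ ($\lambda>0$) this holds whenever $0<\Delta^p<\lambda^{-1}\log(k-1)$.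
   Context: CMF: $\varphi:[0,\infty)\to\mathbb R$ infinitely differentiable on $(0,\infty)$, right-continuous at $0$, $(-1)^n\varphi^{(n)}(x)\ge0$ for $x>0$, $n\ge0$. A CMF dictionary in dimension $D$ is $\mathbf a:\mathbb R^D\to\mathcal H$ ($\mathcal H$ real Hilbert) with $\langle\mathbf a(\theta),\mathbf a(\theta')\rangle=\varphi(\|\theta-\theta'\|_p^p)$, $\varphi$ a CMF, $\varphi(0)=1$, $\lim_{x\to\infty}\varphi(x)=0$, $0<p\le1$, $\|\theta\|_p^p=\sum_d|\theta[d]|^p$. The first OMP iteration with input $\mathbf y$ selects some element of $\arg\max_\theta|\langle\mathbf a(\theta),\mathbf y\rangle|$. *)

theory Defs
  imports "HOL-Analysis.Analysis"
begin

text \<open>Completely monotone function (CMF) on [0,inf): infinitely differentiable on (0,inf),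
  right-continuous at 0, and (-1)^n phi^(n)(x) \<ge> 0 for x > 0 and all n.
  Only the values of phi on [0,inf) are relevant.\<close>
definition CMF :: "(real \<Rightarrow> real) \<Rightarrow> bool" where
  "CMF \<phi> \<longleftrightarrow>
     (\<phi> \<longlongrightarrow> \<phi> 0) (at_right 0) \<and>
     (\<forall>n x. 0 < x \<longrightarrow> (deriv ^^ n) \<phi> differentiable (at x)) \<and>
     (\<forall>n x. 0 < x \<longrightarrow> (-1) ^ n * (deriv ^^ n) \<phi> x \<ge> 0)"

definition pnorm_pow :: "real \<Rightarrow> real ^ 'd \<Rightarrow> real" where
  "pnorm_pow p \<theta> = (\<Sum>i\<in>UNIV. \<bar>\<theta> $ i\<bar> powr p)"

definition CMF_dictionary ::
  "(real \<Rightarrow> real) \<Rightarrow> real \<Rightarrow> (real ^ 'd \<Rightarrow> 'h::real_inner) \<Rightarrow> bool" where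
  "CMF_dictionary \<phi> p a \<longleftrightarrow>
     CMF \<phi> \<and> \<phi> 0 = 1 \<and> (\<phi> \<longlongrightarrow> 0) at_top \<and> 0 < p \<and> p \<le> 1 \<and>
     (\<forall>\<theta> \<theta>'. inner (a \<theta>) (a \<theta>') = \<phi> (pnorm_pow p (\<theta> - \<theta>')))"

text \<open>Parameters that the first OMP iteration may select with input y:
  the maximisers of |<a(\<theta>), y>|.\<close>
definition omp_first_choices :: "(real ^ 'd \<Rightarrow> 'h::real_inner) \<Rightarrow> 'h \<Rightarrow> (real ^ 'd) set" where
  "omp_first_choices a y = {\<theta>. \<forall>\<theta>'. \<bar>inner (a \<theta>') y\<bar> \<le> \<bar>inner (a \<theta>) y\<bar>}"

end

theory Submission
  imports Defs
begin

text \<open>With \<open>x = \<Delta>\<^sup>p\<close>, the correlations with \<open>y\<close> are \<open>k \<phi>(x)\<close> at the origin and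
  \<open>1 + (k - 1) \<phi>(2x)\<close> at every atom, so it suffices that
  \<open>g(x) = k \<phi>(x) - (k - 1) \<phi>(2x)\<close> exceeds \<open>g(0) = 1\<close> for small \<open>x > 0\<close>.
  Its right derivative at 0 is \<open>(2 - k) \<phi>'(0\<^sup>+)\<close>, which is positive because complete
  monotonicity makes \<open>\<phi>\<close> convex, so \<open>\<phi>'(0\<^sup>+) \<le> \<phi>'\<close>, and a convex function tending to 0
  cannot start with a nonnegative slope. For \<open>\<phi>(t) = e\<^sup>-\<^sup>\<lambda>\<^sup>t\<close> the gap factors as
  \<open>((k - 1) u - 1)(1 - u)\<close> with \<open>u = e\<^sup>-\<^sup>\<lambda>\<^sup>x\<close>, which is positive exactly below the threshold.\<close>

lemma CMF_nonneg:
  assumes "CMF \<phi>" "0 < x"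
  shows "0 \<le> \<phi> x"
  using assms unfolding CMF_def by (metis funpow_0 power_0 mult_1)

lemma CMF_has_deriv:
  assumes "CMF \<phi>" "0 < x"
  shows "(\<phi> has_real_derivative deriv \<phi> x) (at x)"
  using assms unfolding CMF_def by (metis funpow_0 DERIV_deriv_iff_real_differentiable)

lemma CMF_deriv_mono:
  assumes cmf: "CMF \<phi>" and "0 < s" "s \<le> t"
  shows "deriv \<phi> s \<le> deriv \<phi> t"
proof (rule DERIV_nonneg_imp_nondecreasing[OF \<open>s \<le> t\<close>])
  fix x assume "s \<le> x" "x \<le> t"
  with \<open>0 < s\<close> have "0 < x" by simp
  with cmf have "(deriv ^^ 1) \<phi> differentiable (at x)" and "(-1) ^ 2 * (deriv ^^ 2) \<phi> x \<ge> 0"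
    unfolding CMF_def by blast+
  then show "\<exists>y. (deriv \<phi> has_real_derivative y) (at x) \<and> 0 \<le> y"
    using DERIV_deriv_iff_real_differentiable by (auto simp: numeral_2_eq_2)
qed

lemma CMF_mean_value:
  assumes cmf: "CMF \<phi>" and "0 < t"
  shows "\<exists>z. 0 < z \<and> z < t \<and> \<phi> t - \<phi> 0 = t * deriv \<phi> z"
proof -
  have "continuous (at x within {0..t}) \<phi>" if "x \<in> {0..t}" for x
  proof (cases "x = 0")
    case True
    have "(\<phi> \<longlongrightarrow> \<phi> 0) (at_right 0)"
      using cmf unfolding CMF_def by blast
    then show ?thesis
      using True by (simp add: continuous_within at_within_Icc_at_right \<open>0 < t\<close>)
  next
    case False
    with that have "0 < x" by simp
    then show ?thesis
      using CMF_has_deriv[OF cmf] by (metis DERIV_continuous continuous_at_imp_continuous_at_within)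
  qed
  then have "continuous_on {0..t} \<phi>"
    by (simp add: continuous_on_eq_continuous_within)
  then obtain l z where "0 < z" "z < t" "(\<phi> has_real_derivative l) (at z)" "\<phi> t - \<phi> 0 = (t - 0) * l"
    using MVT[OF \<open>0 < t\<close>] CMF_has_deriv[OF cmf] by (metis real_differentiable_def)
  then show ?thesis
    using CMF_has_deriv[OF cmf] DERIV_unique by fastforce
qed

lemma CMF_right_deriv_le_deriv:
  assumes cmf: "CMF \<phi>" and rd: "(\<phi> has_real_derivative d) (at 0 within {0..})" and "0 < x"
  shows "d \<le> deriv \<phi> x"
proof (rule tendsto_le[of "at_right 0" "\<lambda>_. deriv \<phi> x" _ "\<lambda>t. (\<phi> t - \<phi> 0) / t"])
  have "((\<lambda>t. (\<phi> t - \<phi> 0) / (t - 0)) \<longlongrightarrow> d) (at 0 within {0..})"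
    using rd has_field_derivative_iff by blast
  then show "((\<lambda>t. (\<phi> t - \<phi> 0) / t) \<longlongrightarrow> d) (at_right 0)"
    by (auto intro: tendsto_within_subset)
  show "\<forall>\<^sub>F t in at_right 0. (\<phi> t - \<phi> 0) / t \<le> deriv \<phi> x"
    unfolding eventually_at_right_field
  proof (intro exI[of _ x] conjI allI impI)
    fix t :: real assume t: "0 < t" "t < x"
    then obtain z where "0 < z" "z < t" "\<phi> t - \<phi> 0 = t * deriv \<phi> z"
      using CMF_mean_value[OF cmf] by blast
    moreover have "deriv \<phi> z \<le> deriv \<phi> x"
      using CMF_deriv_mono[OF cmf] \<open>0 < z\<close> \<open>z < t\<close> t by simp
    ultimately show "(\<phi> t - \<phi> 0) / t \<le> deriv \<phi> x" using t by simp
  qed (use \<open>0 < x\<close> in simp)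
qed simp_all

lemma CMF_right_deriv_neg:
  assumes cmf: "CMF \<phi>" and "0 < \<phi> 0" and lim: "(\<phi> \<longlongrightarrow> 0) at_top"
    and rd: "(\<phi> has_real_derivative d) (at 0 within {0..})"
  shows "d < 0"
proof (rule ccontr)
  assume "\<not> d < 0"
  have ge: "\<phi> 0 \<le> \<phi> x" if x: "0 < x" for x
  proof -
    obtain z where z: "0 < z" "\<phi> x - \<phi> 0 = x * deriv \<phi> z"
      using CMF_mean_value[OF cmf x] by blast
    have "0 \<le> deriv \<phi> z"
      using CMF_right_deriv_le_deriv[OF cmf rd \<open>0 < z\<close>] \<open>\<not> d < 0\<close> by simp
    then have "0 \<le> x * deriv \<phi> z"
      using x by simp
    with z show ?thesis by linarith
  qed
  obtain N where "\<And>x. N \<le> x \<Longrightarrow> \<phi> x < \<phi> 0"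
    using order_tendstoD(2)[OF lim \<open>0 < \<phi> 0\<close>] unfolding eventually_at_top_linorder by blast
  then have "\<phi> (max N 1) < \<phi> 0" by simp
  with ge[of "max N 1"] show False by (simp add: less_max_iff_disj)
qed

lemma CMF_two_scale_gap:
  fixes K :: real
  assumes cmf: "CMF \<phi>" and "\<phi> 0 = 1" and lim: "(\<phi> \<longlongrightarrow> 0) at_top"
    and rd: "(\<phi> has_real_derivative d) (at 0 within {0..})" and "2 < K"
  shows "\<exists>x0>0. \<forall>x. 0 < x \<longrightarrow> x < x0 \<longrightarrow> 1 + (K - 1) * \<phi> (2 * x) < K * \<phi> x"
proof -
  have "(\<lambda>x. 2 * x) ` {0::real..} = {0..}"
    by (auto intro!: image_eqI[where x = "_ / 2"])
  with rd have "(\<phi> has_real_derivative d) (at (2 * 0) within (\<lambda>x. 2 * x) ` {0..})"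
    by simp
  moreover have "((\<lambda>x. 2 * x) has_real_derivative 2) (at 0 within {0..})"
    by (auto intro!: derivative_eq_intros)
  ultimately have "(\<phi> \<circ> (\<lambda>x. 2 * x) has_real_derivative d * 2) (at 0 within {0..})"
    by (rule DERIV_image_chain)
  then have "((\<lambda>x. K * \<phi> x - (K - 1) * \<phi> (2 * x)) has_real_derivative (2 - K) * d)
      (at 0 within {0..})"
    by (auto intro!: derivative_eq_intros rd simp: o_def algebra_simps)
  moreover have "0 < (2 - K) * d"
    using CMF_right_deriv_neg[OF cmf _ lim rd] assms by (simp add: mult_neg_neg)
  ultimately obtain x0 where "0 < x0"
      "\<forall>h>0. h \<in> {0..} \<longrightarrow> h < x0 \<longrightarrow> K * \<phi> 0 - (K - 1) * \<phi> (2 * 0) < K * \<phi> h - (K - 1) * \<phi> (2 * h)"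
    by (fastforce dest: has_real_derivative_pos_inc_right)
  then show ?thesis
    using \<open>\<phi> 0 = 1\<close> by (intro exI[of _ x0]) auto
qed

lemma exp_two_scale_gap:
  fixes lam x K :: real
  assumes "0 < lam" "0 < x" "2 < K" "x < ln (K - 1) / lam"
  shows "1 + (K - 1) * exp (- lam * (2 * x)) < K * exp (- lam * x)"
proof -
  define u where "u = exp (- lam * x)"
  have "lam * x < ln (K - 1)"
    using assms by (simp add: pos_less_divide_eq mult.commute)
  then have "exp (lam * x) < exp (ln (K - 1))"
    by simp
  also have "\<dots> = K - 1"
    using \<open>2 < K\<close> by simp
  finally have "exp (lam * x) * u < (K - 1) * u"
    unfolding u_def by simp
  moreover have "exp (lam * x) * u = 1"
    unfolding u_def by (simp flip: exp_add)
  moreover have "u < 1"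
    unfolding u_def using assms by simp
  ultimately have "0 < ((K - 1) * u - 1) * (1 - u)"
    by simp
  moreover have "exp (- lam * (2 * x)) = u * u"
    unfolding u_def by (simp flip: exp_add)
  ultimately show ?thesis
    unfolding u_def[symmetric] by (simp add: algebra_simps)
qed

lemma pnorm_pow_minus: "pnorm_pow p (- \<theta>) = pnorm_pow p \<theta>"
  by (simp add: pnorm_pow_def)

lemma omp_first_choices_disjoint:
  assumes "\<And>\<theta>. \<theta> \<in> S \<Longrightarrow> \<bar>inner (a \<theta>) y\<bar> < \<bar>inner (a \<theta>\<^sub>0) y\<bar>"
  shows "omp_first_choices a y \<inter> S = {}"
proof -
  have "\<theta> \<notin> omp_first_choices a y" if "\<theta> \<in> S" for \<theta>
    using assms[OF that] unfolding omp_first_choices_def by (auto simp: not_le)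
  then show ?thesis by blast
qed

context
  fixes a :: "real ^ 'd \<Rightarrow> 'h::real_inner" and \<phi> :: "real \<Rightarrow> real" and p :: real
    and \<theta>s :: "nat \<Rightarrow> real ^ 'd" and k :: nat and x :: real
  assumes kernel: "\<And>\<theta> \<theta>'. inner (a \<theta>) (a \<theta>') = \<phi> (pnorm_pow p (\<theta> - \<theta>'))"
    and pairwise: "\<And>l l'. l \<in> {1..k} \<Longrightarrow> l' \<in> {1..k} \<Longrightarrow> l \<noteq> l' \<Longrightarrow>
        pnorm_pow p (\<theta>s l - \<theta>s l') = 2 * x"
    and centred: "\<And>l. l \<in> {1..k} \<Longrightarrow> pnorm_pow p (\<theta>s l) = x"
begin

lemma inner_origin_sum_atoms: "inner (a 0) (\<Sum>l=1..k. a (\<theta>s l)) = real k * \<phi> x"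
proof -
  have "inner (a 0) (\<Sum>l=1..k. a (\<theta>s l)) = (\<Sum>l=1..k. \<phi> x)"
    unfolding inner_sum_right by (rule sum.cong) (simp_all add: kernel centred pnorm_pow_minus)
  then show ?thesis by simp
qed

lemma inner_atom_sum_atoms:
  assumes "\<phi> 0 = 1" and l: "l \<in> {1..k}"
  shows "inner (a (\<theta>s l)) (\<Sum>l'=1..k. a (\<theta>s l')) = 1 + (real k - 1) * \<phi> (2 * x)"
proof -
  have self: "inner (a (\<theta>s l)) (a (\<theta>s l)) = 1"
    using \<open>\<phi> 0 = 1\<close> by (simp add: kernel pnorm_pow_def)
  have "inner (a (\<theta>s l)) (\<Sum>l'=1..k. a (\<theta>s l'))
      = inner (a (\<theta>s l)) (a (\<theta>s l)) + (\<Sum>l'\<in>{1..k} - {l}. inner (a (\<theta>s l)) (a (\<theta>s l')))"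
    using l by (simp add: inner_sum_right inner_add_right sum.remove)
  also have "\<dots> = 1 + (\<Sum>l'\<in>{1..k} - {l}. \<phi> (2 * x))"
    unfolding self by (intro arg_cong2[where f = "(+)"] refl sum.cong) (use l in \<open>auto simp: kernel pairwise\<close>)
  also have "\<dots> = 1 + (real k - 1) * \<phi> (2 * x)"
    using l by (simp add: of_nat_diff)
  finally show ?thesis .
qed

lemma origin_beats_atoms:
  assumes "\<phi> 0 = 1" and "1 \<le> k" and "0 \<le> \<phi> (2 * x)"
    and gap: "1 + (real k - 1) * \<phi> (2 * x) < real k * \<phi> x"
  shows "let y = (\<Sum>l=1..k. a (\<theta>s l)) in
           (\<forall>l\<in>{1..k}. \<bar>inner (a 0) y\<bar> > \<bar>inner (a (\<theta>s l)) y\<bar>) \<and>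
           omp_first_choices a y \<inter> \<theta>s ` {1..k} = {}"
proof -
  have beats: "\<bar>inner (a (\<theta>s l)) (\<Sum>l=1..k. a (\<theta>s l))\<bar> < \<bar>inner (a 0) (\<Sum>l=1..k. a (\<theta>s l))\<bar>"
    if "l \<in> {1..k}" for l
    using gap \<open>1 \<le> k\<close> \<open>0 \<le> \<phi> (2 * x)\<close>
    unfolding inner_atom_sum_atoms[OF \<open>\<phi> 0 = 1\<close> that] inner_origin_sum_atoms by simp
  then show ?thesis
    unfolding Let_def by (auto intro!: omp_first_choices_disjoint[where \<theta>\<^sub>0 = 0])
qed

end

theorem mainTheorem16:
  fixes a :: "real ^ 'd \<Rightarrow> 'h::{real_inner, complete_space}"
    and \<phi> :: "real \<Rightarrow> real" and p :: real and k :: nat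
  assumes D: "CARD('d) \<ge> 3"
    and k: "3 \<le> k" "k \<le> CARD('d)"
    and dict: "CMF_dictionary \<phi> p a"
    and rdiff: "\<exists>d. (\<phi> has_real_derivative d) (at 0 within {0..})"
  shows
    "(\<exists>x0>0. \<forall>\<Delta>>0. \<Delta> powr p < x0 \<longrightarrow>
        (\<forall>\<theta>s :: nat \<Rightarrow> real ^ 'd.
           (\<forall>l\<in>{1..k}. \<forall>l'\<in>{1..k}. l \<noteq> l' \<longrightarrow> pnorm_pow p (\<theta>s l - \<theta>s l') = 2 * \<Delta> powr p) \<and>
           (\<forall>l\<in>{1..k}. pnorm_pow p (\<theta>s l) = \<Delta> powr p) \<longrightarrow>
           (let y = (\<Sum>l=1..k. a (\<theta>s l)) in
              (\<forall>l\<in>{1..k}. \<bar>inner (a 0) y\<bar> > \<bar>inner (a (\<theta>s l)) y\<bar>) \<and>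
              omp_first_choices a y \<inter> \<theta>s ` {1..k} = {})))
     \<and>
     (\<forall>lam>0. (\<forall>t\<ge>0. \<phi> t = exp (- lam * t)) \<longrightarrow>
        (\<forall>\<Delta>>0. \<Delta> powr p < ln (real k - 1) / lam \<longrightarrow>
        (\<forall>\<theta>s :: nat \<Rightarrow> real ^ 'd.
           (\<forall>l\<in>{1..k}. \<forall>l'\<in>{1..k}. l \<noteq> l' \<longrightarrow> pnorm_pow p (\<theta>s l - \<theta>s l') = 2 * \<Delta> powr p) \<and>
           (\<forall>l\<in>{1..k}. pnorm_pow p (\<theta>s l) = \<Delta> powr p) \<longrightarrow>
           (let y = (\<Sum>l=1..k. a (\<theta>s l)) in
              (\<forall>l\<in>{1..k}. \<bar>inner (a 0) y\<bar> > \<bar>inner (a (\<theta>s l)) y\<bar>) \<and>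
              omp_first_choices a y \<inter> \<theta>s ` {1..k} = {}))))"
proof -
  \<comment> \<open>\<open>D\<close> and \<open>k \<le> CARD('d)\<close> only guarantee that equidistant configurations exist.\<close>
  have cmf: "CMF \<phi>" and "\<phi> 0 = 1" and lim: "(\<phi> \<longlongrightarrow> 0) at_top"
    and kernel: "\<And>\<theta> \<theta>'. inner (a \<theta>) (a \<theta>') = \<phi> (pnorm_pow p (\<theta> - \<theta>'))"
    using dict unfolding CMF_dictionary_def by auto
  have "2 < real k" using k by simp
  have beats: "\<forall>\<theta>s :: nat \<Rightarrow> real ^ 'd.
           (\<forall>l\<in>{1..k}. \<forall>l'\<in>{1..k}. l \<noteq> l' \<longrightarrow> pnorm_pow p (\<theta>s l - \<theta>s l') = 2 * \<Delta> powr p) \<and>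
           (\<forall>l\<in>{1..k}. pnorm_pow p (\<theta>s l) = \<Delta> powr p) \<longrightarrow>
           (let y = (\<Sum>l=1..k. a (\<theta>s l)) in
              (\<forall>l\<in>{1..k}. \<bar>inner (a 0) y\<bar> > \<bar>inner (a (\<theta>s l)) y\<bar>) \<and>
              omp_first_choices a y \<inter> \<theta>s ` {1..k} = {})"
    if "0 < \<Delta>" and "1 + (real k - 1) * \<phi> (2 * \<Delta> powr p) < real k * \<phi> (\<Delta> powr p)" for \<Delta>
    using that k \<open>\<phi> 0 = 1\<close> CMF_nonneg[OF cmf, of "2 * \<Delta> powr p"]
    by (intro allI impI origin_beats_atoms[where a = a and \<phi> = \<phi> and p = p, OF kernel]) auto
  obtain d where "(\<phi> has_real_derivative d) (at 0 within {0..})"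
    using rdiff by blast
  from CMF_two_scale_gap[OF cmf \<open>\<phi> 0 = 1\<close> lim this \<open>2 < real k\<close>]
  obtain x0 where "0 < x0"
    and gap: "\<And>x. 0 < x \<Longrightarrow> x < x0 \<Longrightarrow> 1 + (real k - 1) * \<phi> (2 * x) < real k * \<phi> x"
    by blast
  have small_gap: "1 + (real k - 1) * \<phi> (2 * \<Delta> powr p) < real k * \<phi> (\<Delta> powr p)"
    if "0 < \<Delta>" "\<Delta> powr p < x0" for \<Delta>
    using that by (simp add: gap)
  have exp_gap: "1 + (real k - 1) * \<phi> (2 * \<Delta> powr p) < real k * \<phi> (\<Delta> powr p)"
    if "0 < lam" "\<forall>t\<ge>0. \<phi> t = exp (- lam * t)" "0 < \<Delta>" "\<Delta> powr p < ln (real k - 1) / lam"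
    for lam \<Delta> :: real
    using that exp_two_scale_gap[OF \<open>0 < lam\<close> _ \<open>2 < real k\<close>, of "\<Delta> powr p"] by simp
  show ?thesis
    using \<open>0 < x0\<close> by (intro conjI exI[of _ x0] beats allI impI) (blast intro: small_gap exp_gap)+
qed

end
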